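(* Let $f_\bullet\colon X\to Z$ be a non-expansive map between finite metric spaces and $f\colon V\to U$ the induced persistence morphism, $V=\mathrm{PH}_0(X)$, $U=\mathrm{PH}_0(Z)$. Then the block function $\mathcal{M}^0_f$ induces a unique partial matching $\sigma^f\colon\mathrm{Rep}\,\mathcal{B}(V)\nrightarrow\mathrm{Rep}\,\mathcal{B}(U)$; that is, $\sum_{b}\mathcal{M}^0_f(a,b)\le m^V(a)$ for every $a\in S^V$ and $\sum_a\mathcal{M}^0_f(a,b)\le m^U(b)$ for every $b\in S^U$, so that there is a (canonical) partial matching matching exactly $\mathcal{M}^0_f(a,b)$ copies of the bar $[0,a)$ with copies of the bar $[0,b)$ for all $a,b$.
   Context: All vector spaces are over $\mathbb{Z}_2$. A map $f_\bullet\colon X\to Z$ is non-expansive if $d^Z(f_\bullet(x),f_\bullet(y))\le d^X(x,y)$. For a finite metric space $X$ and $r\ge0$, $\mathrm{VR}_r(X)$ is the graph on $X$ with edges $[x,y]$ for $d^X(x,y)\le r$; $\mathrm{PH}_0(X)$ is the persistence module $r\mapsto H_0(\mathrm{VR}_r(X))$ (free on connected components) with structure maps $\rho_{rs}$ induced by inclusion; a non-expansive map induces graph maps $\mathrm{VR}_r(X)\to\mathrm{VR}_r(Z)$ and hence a persistence morphism $f$. The barcode $\mathcal{B}(V)=(S^V,m^V)$ is the multiset of finite death values $b>0$ of the bars $[0,b)$ of $V$ (infinite bar excluded), with multiplicities $m^V(b)$. For a multiset $(S,m)$, $\mathrm{Rep}(S,m)=\{(s,\ell): s\in S,\ 1\le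 \ell\le m(s)\}$. A partial matching $\mathrm{Rep}(S,m)\nrightarrow \mathrm{Rep}(S',m')$ is a bijection between subsets of the two representations. With $\ker^+_b(U)=\ker(\rho^U_{0b})$, $\ker^-_b(U)=\bigcup_{0\le r<b}\ker(\rho^U_{0r})$ and $f_0$ the degree-0 component of $f$, $\mathcal{M}^0_f(a,b)=\dim\frac{f_0(\ker^+_a V)\cap \ker^+_b U}{f_0(\ker^-_a V)\cap\ker^+_b U+f_0(\ker^+_a V)\cap \ker^-_b U}$ for $a,b>0$. *)

theory Defs
  imports Complex_Main "HOL-Library.Function_Algebras" "HOL-Library.Z2"
begin

definition finite_metric_space :: "'a set \<Rightarrow> ('a \<Rightarrow> 'a \<Rightarrow> real) \<Rightarrow> bool" where
  "finite_metric_space X d \<longleftrightarrow> finite X \<and>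
     (\<forall>x\<in>X. \<forall>y\<in>X. d x y \<ge> 0 \<and> (d x y = 0 \<longleftrightarrow> x = y) \<and> d x y = d y x) \<and>
     (\<forall>x\<in>X. \<forall>y\<in>X. \<forall>z\<in>X. d x z \<le> d x y + d y z)"

definition non_expansive ::
  "'a set \<Rightarrow> ('a \<Rightarrow> 'a \<Rightarrow> real) \<Rightarrow> 'b set \<Rightarrow> ('b \<Rightarrow> 'b \<Rightarrow> real) \<Rightarrow> ('a \<Rightarrow> 'b) \<Rightarrow> bool" where
  "non_expansive X dX Z dZ f \<longleftrightarrow> f ` X \<subseteq> Z \<and> (\<forall>x\<in>X. \<forall>y\<in>X. dZ (f x) (f y) \<le> dX x y)"

definition bscale :: "bit \<Rightarrow> ('a \<Rightarrow> bit) \<Rightarrow> ('a \<Rightarrow> bit)" where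
  "bscale c v = (\<lambda>x. c * v x)"

definition bdim :: "('a \<Rightarrow> bit) set \<Rightarrow> nat" where
  "bdim W = vector_space.dim bscale W"

text \<open>dimension of the quotient A / (B + C) of subspaces (B, C contained in A)\<close>
definition quot_dim :: "('a \<Rightarrow> bit) set \<Rightarrow> ('a \<Rightarrow> bit) set \<Rightarrow> ('a \<Rightarrow> bit) set \<Rightarrow> nat" where
  "quot_dim A B C = bdim A - bdim {b + c | b c. b \<in> B \<and> c \<in> C}"

definition vr_edges :: "'a set \<Rightarrow> ('a \<Rightarrow> 'a \<Rightarrow> real) \<Rightarrow> real \<Rightarrow> ('a \<times> 'a) set" where
  "vr_edges X d r = {(x, y). x \<in> X \<and> y \<in> X \<and> d x y \<le> r}"

definition vr_comps :: "'a set \<Rightarrow> ('a \<Rightarrow> 'a \<Rightarrow> real) \<Rightarrow> real \<Rightarrow> 'a set set" where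
  "vr_comps X d r = {{y \<in> X. (x, y) \<in> (vr_edges X d r)\<^sup>*} | x. x \<in> X}"

text \<open>H_0(VR_0(X)) is identified with Z_2^X (components of VR_0(X) are the points of X)\<close>
definition chains0 :: "'a set \<Rightarrow> ('a \<Rightarrow> bit) set" where
  "chains0 X = {v. \<forall>x. x \<notin> X \<longrightarrow> v x = 0}"

text \<open>structure map rho_{0r} : H_0(VR_0 X) -> H_0(VR_r X) (free on components)\<close>
definition rho0 :: "'a set \<Rightarrow> ('a \<Rightarrow> 'a \<Rightarrow> real) \<Rightarrow> real \<Rightarrow> ('a \<Rightarrow> bit) \<Rightarrow> ('a set \<Rightarrow> bit)" where
  "rho0 X d r v = (\<lambda>C. if C \<in> vr_comps X d r then (\<Sum>x\<in>C. v x) else 0)"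

definition ker_plus :: "'a set \<Rightarrow> ('a \<Rightarrow> 'a \<Rightarrow> real) \<Rightarrow> real \<Rightarrow> ('a \<Rightarrow> bit) set" where
  "ker_plus X d b = {v \<in> chains0 X. rho0 X d b v = 0}"

definition ker_minus :: "'a set \<Rightarrow> ('a \<Rightarrow> 'a \<Rightarrow> real) \<Rightarrow> real \<Rightarrow> ('a \<Rightarrow> bit) set" where
  "ker_minus X d b = (\<Union>r\<in>{0..<b}. ker_plus X d r)"

definition push0 :: "'a set \<Rightarrow> ('a \<Rightarrow> 'b) \<Rightarrow> ('a \<Rightarrow> bit) \<Rightarrow> ('b \<Rightarrow> bit)" where
  "push0 X f v = (\<lambda>z. \<Sum>x\<in>{x \<in> X. f x = z}. v x)"

definition bar_mult :: "'a set \<Rightarrow> ('a \<Rightarrow> 'a \<Rightarrow> real) \<Rightarrow> real \<Rightarrow> nat" where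
  "bar_mult X d b = (if b > 0 then bdim (ker_plus X d b) - bdim (ker_minus X d b) else 0)"

definition bar_set :: "'a set \<Rightarrow> ('a \<Rightarrow> 'a \<Rightarrow> real) \<Rightarrow> real set" where
  "bar_set X d = {b. b > 0 \<and> bar_mult X d b > 0}"

definition Rep :: "real set \<Rightarrow> (real \<Rightarrow> nat) \<Rightarrow> (real \<times> nat) set" where
  "Rep S m = {(s, l). s \<in> S \<and> 1 \<le> l \<and> l \<le> m s}"

definition partial_matching :: "('p \<times> 'q) set \<Rightarrow> 'p set \<Rightarrow> 'q set \<Rightarrow> bool" where
  "partial_matching \<sigma> P Q \<longleftrightarrow> \<sigma> \<subseteq> P \<times> Q \<and>
     (\<forall>p q q'. (p, q) \<in> \<sigma> \<and> (p, q') \<in> \<sigma> \<longrightarrow> q = q') \<and>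
     (\<forall>p p' q. (p, q) \<in> \<sigma> \<and> (p', q) \<in> \<sigma> \<longrightarrow> p = p')"

definition block_M0 ::
  "'a set \<Rightarrow> ('a \<Rightarrow> 'a \<Rightarrow> real) \<Rightarrow> 'b set \<Rightarrow> ('b \<Rightarrow> 'b \<Rightarrow> real) \<Rightarrow> ('a \<Rightarrow> 'b) \<Rightarrow> real \<Rightarrow> real \<Rightarrow> nat" where
  "block_M0 X dX Z dZ f a b =
     quot_dim (push0 X f ` ker_plus X dX a \<inter> ker_plus Z dZ b)
              (push0 X f ` ker_minus X dX a \<inter> ker_plus Z dZ b)
              (push0 X f ` ker_plus X dX a \<inter> ker_minus Z dZ b)"

end

theory Submission
  imports Defs "HOL-Library.Set_Algebras" "HOL-Library.Product_Plus"
begin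

(* All dimensions involved are those of finite Z_2-vector spaces, so they can be computed by
   counting: a finite subspace W has 2^(dim W) elements. Grassmann's formula and the rank bound
   dim g(T)/g(S) <= dim T/S thus become the product formula |U + W| |U \<inter> W| = |U| |W| and the
   fibre count |T| = |g(T)| |ker g \<inter> T| of finite abelian groups.

   Fix a > 0 and put P = f_0(ker+_a) \<supseteq> Q = f_0(ker-_a), L_b = ker+_b \<supseteq> L'_b = ker-_b. Then
   M(a,b) = dim (P \<inter> L_b) / (Q \<inter> L_b + P \<inter> L'_b) satisfies
   M(a,b) + dim (P \<inter> L'_b + Q) = dim (P \<inter> L_b + Q), and L_b \<subseteq> L'_b' for b < b', so summing over
   the bars b in increasing order telescopes to  sum_b M(a,b) <= dim P/Q <= dim ker+_a/ker-_a = m^V(a).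
   The expression for M(a,b) is symmetric under exchanging (P, Q) with (L, L'), which gives the
   bound on the sums over a in the same way. Given both bounds, the copies of a bar [0,a) are
   handed out to the blocks (a, b) consecutively in increasing order of b, and likewise for the
   copies of [0,b). *)

section \<open>Counting in finite abelian groups\<close>

lemma card_eq_card_image_mult_card_kernel:
  fixes g :: "'a::ab_group_add \<Rightarrow> 'b::ab_group_add"
  assumes g: "additive g" and "finite T"
    and diff_closed: "\<And>x y. x \<in> T \<Longrightarrow> y \<in> T \<Longrightarrow> x - y \<in> T"
  shows "card T = card (g ` T) * card {t \<in> T. g t = 0}"
proof -
  have fiber: "card {t \<in> T. g t = y} = card {t \<in> T. g t = 0}" if y: "y \<in> g ` T" for y
  proof -
    obtain t0 where t0: "t0 \<in> T" "y = g t0" using y by blast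
    have "t + t0 \<in> T" if "t \<in> T" for t
      using diff_closed[OF that diff_closed[OF diff_closed[OF t0(1) t0(1)] t0(1)]] by simp
    then have "bij_betw (\<lambda>t. t - t0) {t \<in> T. g t = y} {t \<in> T. g t = 0}"
      by (intro bij_betw_byWitness[where f' = "\<lambda>t. t + t0"])
        (auto simp: t0 diff_closed additive.diff[OF g] additive.add[OF g])
    then show ?thesis by (rule bij_betw_same_card)
  qed
  have "card T = (\<Sum>y\<in>g ` T. card {t \<in> T. g t = y})"
    unfolding card_eq_sum by (rule sum.image_gen[OF \<open>finite T\<close>])
  also have "\<dots> = card (g ` T) * card {t \<in> T. g t = 0}"
    using fiber by simp
  finally show ?thesis .
qed

lemma card_set_plus_mult_card_Int:
  fixes U W :: "'a::ab_group_add set"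
  assumes "finite U" "finite W"
    and U: "\<And>x y. x \<in> U \<Longrightarrow> y \<in> U \<Longrightarrow> x - y \<in> U"
    and W: "\<And>x y. x \<in> W \<Longrightarrow> y \<in> W \<Longrightarrow> x - y \<in> W"
  shows "card (U + W) * card (U \<inter> W) = card U * card W"
proof -
  let ?add = "\<lambda>(u, w). u + w :: 'a"
  have "additive ?add" by unfold_locales (auto simp: algebra_simps)
  then have "card (U \<times> W) = card (?add ` (U \<times> W)) * card {p \<in> U \<times> W. ?add p = 0}"
    by (rule card_eq_card_image_mult_card_kernel) (auto simp: assms)
  moreover have "card {p \<in> U \<times> W. ?add p = 0} = card (U \<inter> W)"
  proof -
    have neg: "- x \<in> S" if "x \<in> S" "\<And>x y. x \<in> S \<Longrightarrow> y \<in> S \<Longrightarrow> x - y \<in> S" for x and S :: "'a set"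
      using that(2)[OF that(2)[OF that(1) that(1)] that(1)] by simp
    have "bij_betw fst {p \<in> U \<times> W. ?add p = 0} (U \<inter> W)"
      by (intro bij_betw_byWitness[where f' = "\<lambda>u. (u, - u)"])
        (auto simp: add_eq_0_iff2 neg U W dest: neg[OF _ W] neg[OF _ U])
    then show ?thesis by (rule bij_betw_same_card)
  qed
  ultimately show ?thesis
    by (simp add: set_plus_image card_cartesian_product)
qed

section \<open>Finite subspaces of Z_2-valued functions\<close>

interpretation bit_vs: vector_space bscale
  unfolding vector_space_def bscale_def by (auto simp: fun_eq_iff algebra_simps)

lemma bscale_0_1 [simp]: "bscale 0 v = 0" "bscale 1 v = v"
  by (auto simp: bscale_def fun_eq_iff)

lemma subspace_bit_iff: "bit_vs.subspace W \<longleftrightarrow> 0 \<in> W \<and> (\<forall>x\<in>W. \<forall>y\<in>W. x + y \<in> W)"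
proof -
  have "bscale c x \<in> W" if "0 \<in> W" "x \<in> W" for c x
    using that by (cases c) simp_all
  then show ?thesis unfolding bit_vs.subspace_def by blast
qed

lemma diff_bit_fun [simp]: "(x :: 'a \<Rightarrow> bit) - y = x + y"
  by (simp add: fun_eq_iff)

lemma add_self_bit_fun [simp]: "(x :: 'a \<Rightarrow> bit) + x = 0" "x + y + y = x"
  by (simp_all add: fun_eq_iff)

lemma span_insert_bit:
  "bit_vs.span (insert a S) = bit_vs.span S \<union> (\<lambda>y. y + a) ` bit_vs.span S"
proof -
  have "(\<exists>k. x - bscale k a \<in> bit_vs.span S) \<longleftrightarrow> x \<in> bit_vs.span S \<or> x + a \<in> bit_vs.span S" for x
  proof
    assume "\<exists>k. x - bscale k a \<in> bit_vs.span S"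
    then obtain k where "x - bscale k a \<in> bit_vs.span S" ..
    then show "x \<in> bit_vs.span S \<or> x + a \<in> bit_vs.span S" by (cases k) simp_all
  next
    assume "x \<in> bit_vs.span S \<or> x + a \<in> bit_vs.span S"
    then show "\<exists>k. x - bscale k a \<in> bit_vs.span S"
      by (metis bscale_0_1 diff_bit_fun add_0_right)
  qed
  moreover have "x + a \<in> bit_vs.span S \<longleftrightarrow> x \<in> (\<lambda>y. y + a) ` bit_vs.span S" for x
    by (auto intro: image_eqI[where x = "x + a"])
  ultimately show ?thesis
    unfolding bit_vs.span_insert by blast
qed

lemma card_span_independent:
  assumes "finite B" "bit_vs.independent B"
  shows "finite (bit_vs.span B) \<and> card (bit_vs.span B) = 2 ^ card B"
  using assms
proof (induction B rule: finite_induct)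
  case empty
  show ?case by simp
next
  case (insert a B)
  then have "a \<notin> bit_vs.span B" and IH: "finite (bit_vs.span B)" "card (bit_vs.span B) = 2 ^ card B"
    by (simp_all add: bit_vs.independent_insert)
  have disjoint: "bit_vs.span B \<inter> (\<lambda>y. y + a) ` bit_vs.span B = {}"
  proof (rule ccontr)
    assume "bit_vs.span B \<inter> (\<lambda>y. y + a) ` bit_vs.span B \<noteq> {}"
    then obtain y where "y \<in> bit_vs.span B" "y + a \<in> bit_vs.span B" by auto
    then have "y + (y + a) \<in> bit_vs.span B" by (rule bit_vs.span_add)
    with \<open>a \<notin> bit_vs.span B\<close> show False by (simp add: add.assoc[symmetric])
  qed
  have "inj_on (\<lambda>y. y + a) (bit_vs.span B)" by (rule inj_onI) simp
  then have "card (bit_vs.span (insert a B)) = 2 * card (bit_vs.span B)"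
    unfolding span_insert_bit using IH(1) disjoint by (simp add: card_Un_disjoint card_image)
  with IH insert.hyps show ?case by (simp add: span_insert_bit)
qed

lemma card_subspace_bit:
  assumes "finite W" "bit_vs.subspace W"
  shows "card W = 2 ^ bdim W"
proof -
  obtain B where B: "B \<subseteq> W" "bit_vs.independent B" "W \<subseteq> bit_vs.span B" "card B = bdim W"
    using bit_vs.basis_exists[of W] unfolding bdim_def by blast
  then have "bit_vs.span B = W" using assms(2) bit_vs.span_subspace by blast
  with B card_span_independent[of B] finite_subset[OF B(1) assms(1)] show ?thesis by simp
qed

lemma bdim_subset:
  assumes "U \<subseteq> W" "finite W"
  shows "bdim U \<le> bdim W"
proof -
  obtain B where "B \<subseteq> W" "bit_vs.independent B" "W \<subseteq> bit_vs.span B" "card B = bdim W"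
    unfolding bdim_def using bit_vs.basis_exists by blast
  moreover have "finite B" using \<open>B \<subseteq> W\<close> assms(2) by (rule finite_subset)
  ultimately show ?thesis
    using assms(1) bit_vs.dim_le_card[of U B] unfolding bdim_def by auto
qed

lemma subspace_eq_if_bdim_eq:
  assumes "U \<subseteq> W" "finite W" "bit_vs.subspace U" "bit_vs.subspace W" "bdim U = bdim W"
  shows "U = W"
  using assms card_subspace_bit[of U] card_subspace_bit[of W]
  by (metis card_subset_eq finite_subset)

lemma set_plus_conv: "A + B = {a + b | a b. a \<in> A \<and> b \<in> B}"
  by (auto simp: set_plus_def)

lemma subspace_set_plus: "bit_vs.subspace U \<Longrightarrow> bit_vs.subspace W \<Longrightarrow> bit_vs.subspace (U + W)"
  unfolding set_plus_conv by (rule bit_vs.subspace_sums)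

lemma bdim_set_plus_Int:
  assumes "finite U" "finite W" and U: "bit_vs.subspace U" and W: "bit_vs.subspace W"
  shows "bdim (U + W) + bdim (U \<inter> W) = bdim U + bdim W"
proof -
  have "card (U + W) * card (U \<inter> W) = card U * card W"
    using assms(1,2) bit_vs.subspace_diff[OF U] bit_vs.subspace_diff[OF W]
    by (rule card_set_plus_mult_card_Int)
  moreover have "card (U + W) = 2 ^ bdim (U + W)"
    using assms by (simp add: card_subspace_bit finite_set_plus subspace_set_plus)
  moreover have "card (U \<inter> W) = 2 ^ bdim (U \<inter> W)"
    using assms by (simp add: card_subspace_bit bit_vs.subspace_inter)
  ultimately have "(2::nat) ^ (bdim (U + W) + bdim (U \<inter> W)) = 2 ^ (bdim U + bdim W)"
    using assms by (simp add: power_add card_subspace_bit)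
  then show ?thesis by simp
qed

lemma subspace_image_additive:
  "additive g \<Longrightarrow> bit_vs.subspace T \<Longrightarrow> bit_vs.subspace (g ` T)"
  unfolding subspace_bit_iff by (auto simp flip: additive.add intro!: image_eqI[OF additive.zero[symmetric]])

lemma bdim_image_le:
  assumes g: "additive g" and "finite T" and S: "bit_vs.subspace S" and T: "bit_vs.subspace T"
    and "S \<subseteq> T"
  shows "bdim (g ` T) + bdim S \<le> bdim (g ` S) + bdim T"
proof -
  have "finite S" using assms finite_subset by blast
  have "card S = card (g ` S) * card {t \<in> S. g t = 0}"
    using g \<open>finite S\<close> bit_vs.subspace_diff[OF S] by (rule card_eq_card_image_mult_card_kernel)
  then have "card (g ` T) * card S = card (g ` S) * (card (g ` T) * card {t \<in> S. g t = 0})"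
    by simp
  also have "\<dots> \<le> card (g ` S) * (card (g ` T) * card {t \<in> T. g t = 0})"
    using assms by (intro mult_le_mono2 card_mono) auto
  also have "\<dots> = card (g ` S) * card T"
    using card_eq_card_image_mult_card_kernel[OF g \<open>finite T\<close> bit_vs.subspace_diff[OF T]] by simp
  finally have "card (g ` T) * card S \<le> card (g ` S) * card T" .
  moreover have "card (g ` T) = 2 ^ bdim (g ` T)" "card (g ` S) = 2 ^ bdim (g ` S)"
    using assms \<open>finite S\<close> by (simp_all add: card_subspace_bit subspace_image_additive)
  ultimately have "(2::nat) ^ (bdim (g ` T) + bdim S) \<le> 2 ^ (bdim (g ` S) + bdim T)"
    using assms \<open>finite S\<close> by (simp add: power_add card_subspace_bit)
  then show ?thesis by simp
qed

lemma set_plus_subset_subspace: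
  "bit_vs.subspace A \<Longrightarrow> B \<subseteq> A \<Longrightarrow> C \<subseteq> A \<Longrightarrow> B + C \<subseteq> A"
  by (auto simp: set_plus_def intro: bit_vs.subspace_add)

lemma set_plus_subspace_absorb:
  assumes "bit_vs.subspace P" "bit_vs.subspace Q" "Q \<subseteq> P"
  shows "P + Q = P"
  using set_plus_subset_subspace[OF assms(1) order_refl assms(3)]
    set_zero_plus2[OF bit_vs.subspace_0[OF assms(2)], of P]
  by (simp add: add.commute)

section \<open>Block dimensions of a pair of filtrations\<close>

definition block_dim ::
  "('a \<Rightarrow> bit) set \<Rightarrow> ('a \<Rightarrow> bit) set \<Rightarrow> ('a \<Rightarrow> bit) set \<Rightarrow> ('a \<Rightarrow> bit) set \<Rightarrow> nat" where
  "block_dim P Q L L' = quot_dim (P \<inter> L) (Q \<inter> L) (P \<inter> L')"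

lemma block_dim_eq: "block_dim P Q L L' = bdim (P \<inter> L) - bdim (Q \<inter> L + P \<inter> L')"
  unfolding block_dim_def quot_dim_def set_plus_conv ..

lemma block_dim_commute: "block_dim P Q L L' = block_dim L L' P Q"
  unfolding block_dim_eq by (simp add: Int_commute add.commute)

lemma block_dim_add_bdim:
  assumes "finite P" and subspaces: "bit_vs.subspace P" "bit_vs.subspace Q" "bit_vs.subspace L"
    "bit_vs.subspace L'" and "Q \<subseteq> P" "L' \<subseteq> L"
  shows "block_dim P Q L L' + bdim (P \<inter> L' + Q) = bdim (P \<inter> L + Q)"
proof -
  define A B C where "A = P \<inter> L" and "B = Q \<inter> L" and "C = P \<inter> L'"
  have fin: "finite A" "finite B" "finite C" "finite Q"
    unfolding A_def B_def C_def using assms by (auto intro: finite_subset)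
  have sub: "bit_vs.subspace A" "bit_vs.subspace B" "bit_vs.subspace C"
    unfolding A_def B_def C_def using subspaces by (auto intro: bit_vs.subspace_inter)
  have "A \<inter> Q = B" "C \<inter> Q = B \<inter> C"
    unfolding A_def B_def C_def using assms by auto
  then have "bdim (A + Q) + bdim B = bdim A + bdim Q" "bdim (C + Q) + bdim (B \<inter> C) = bdim C + bdim Q"
    using bdim_set_plus_Int[of A Q] bdim_set_plus_Int[of C Q] fin sub subspaces by auto
  moreover have "bdim (B + C) + bdim (B \<inter> C) = bdim B + bdim C"
    using bdim_set_plus_Int fin sub by blast
  moreover have "bdim (B + C) \<le> bdim A"
    unfolding A_def B_def C_def
    using assms by (intro bdim_subset set_plus_subset_subspace) (auto intro: bit_vs.subspace_inter finite_subset)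
  ultimately show ?thesis
    unfolding block_dim_eq A_def [symmetric] B_def [symmetric] C_def [symmetric] by linarith
qed

lemma block_dim_self_eq_0:
  assumes "finite P" "bit_vs.subspace P" "bit_vs.subspace L'"
  shows "block_dim P P L L' = 0"
proof -
  have "P \<inter> L \<subseteq> P \<inter> L + P \<inter> L'"
    using set_zero_plus2[of "P \<inter> L'" "P \<inter> L"] assms
    by (simp add: add.commute bit_vs.subspace_0)
  then have "bdim (P \<inter> L) \<le> bdim (P \<inter> L + P \<inter> L')"
    using assms by (intro bdim_subset finite_set_plus) auto
  then show ?thesis unfolding block_dim_eq by simp
qed

lemma sum_block_dim_le:
  fixes L L' :: "'i::linorder \<Rightarrow> ('a \<Rightarrow> bit) set"
  assumes "finite S" "finite P" and P: "bit_vs.subspace P" and Q: "bit_vs.subspace Q" and "Q \<subseteq> P"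
    and L: "\<And>s. s \<in> S \<Longrightarrow> bit_vs.subspace (L s)" "\<And>s. s \<in> S \<Longrightarrow> bit_vs.subspace (L' s)"
      "\<And>s. s \<in> S \<Longrightarrow> L' s \<subseteq> L s"
    and increasing: "\<And>s t. s \<in> S \<Longrightarrow> t \<in> S \<Longrightarrow> s < t \<Longrightarrow> L s \<subseteq> L' t"
  shows "(\<Sum>s\<in>S. block_dim P Q (L s) (L' s)) + bdim Q \<le> bdim P"
proof -
  have fin: "finite (P \<inter> R + Q)" for R
    using assms by (intro finite_set_plus) (auto intro: finite_subset)
  have "(\<Sum>s\<in>A. block_dim P Q (L s) (L' s)) + bdim Q \<le> bdim (P \<inter> R + Q)"
    if "A \<subseteq> S" "bit_vs.subspace R" "\<forall>s\<in>A. L s \<subseteq> R" for A R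
    using finite_subset[OF that(1) \<open>finite S\<close>] that
  proof (induction A arbitrary: R rule: finite_linorder_max_induct)
    case empty
    have "Q \<subseteq> P \<inter> R + Q"
      using empty P by (intro set_zero_plus2) (simp add: bit_vs.subspace_0)
    then show ?case using fin by (simp add: bdim_subset)
  next
    case (insert s A)
    have "L t \<subseteq> L' s" if "t \<in> A" for t
      using that insert.hyps(2) insert.prems(1) by (intro increasing) auto
    then have "(\<Sum>s\<in>A. block_dim P Q (L s) (L' s)) + bdim Q \<le> bdim (P \<inter> L' s + Q)"
      using insert.prems(1) by (intro insert.IH L) auto
    moreover have "block_dim P Q (L s) (L' s) + bdim (P \<inter> L' s + Q) = bdim (P \<inter> L s + Q)"
      using insert assms by (intro block_dim_add_bdim) auto
    moreover have "bdim (P \<inter> L s + Q) \<le> bdim (P \<inter> R + Q)"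
      using insert fin by (intro bdim_subset set_plus_mono2) auto
    moreover have "s \<notin> A" using insert.hyps(2) by blast
    ultimately show ?case using insert.hyps(1) by simp
  qed
  from this[of S UNIV] show ?thesis
    using set_plus_subspace_absorb[OF P Q \<open>Q \<subseteq> P\<close>] by simp
qed

section \<open>Kernels of the structure maps of degree-0 persistent homology\<close>

lemma finite_metric_space_finite: "finite_metric_space X d \<Longrightarrow> finite X"
  unfolding finite_metric_space_def by blast

lemma sym_vr_edges: "finite_metric_space X d \<Longrightarrow> sym (vr_edges X d r)"
  unfolding finite_metric_space_def vr_edges_def sym_def by auto

lemma vr_edges_mono: "r \<le> s \<Longrightarrow> vr_edges X d r \<subseteq> vr_edges X d s"
  unfolding vr_edges_def by auto

definition vr_class :: "'a set \<Rightarrow> ('a \<Rightarrow> 'a \<Rightarrow> real) \<Rightarrow> real \<Rightarrow> 'a \<Rightarrow> 'a set" where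
  "vr_class X d r x = {y \<in> X. (x, y) \<in> (vr_edges X d r)\<^sup>*}"

lemma vr_comps_eq: "vr_comps X d r = vr_class X d r ` X"
  unfolding vr_comps_def vr_class_def by auto

lemma vr_class_subset: "vr_class X d r x \<subseteq> X"
  unfolding vr_class_def by auto

lemma vr_class_mono: "r \<le> s \<Longrightarrow> vr_class X d r x \<subseteq> vr_class X d s x"
  unfolding vr_class_def using rtrancl_mono[OF vr_edges_mono] by blast

lemma vr_class_eq_iff:
  assumes "finite_metric_space X d" "y \<in> X"
  shows "vr_class X d r y = vr_class X d r x \<longleftrightarrow> y \<in> vr_class X d r x"
proof
  assume "vr_class X d r y = vr_class X d r x"
  with \<open>y \<in> X\<close> show "y \<in> vr_class X d r x" unfolding vr_class_def by blast
next
  assume "y \<in> vr_class X d r x"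
  then have "(x, y) \<in> (vr_edges X d r)\<^sup>*" "(y, x) \<in> (vr_edges X d r)\<^sup>*"
    using sym_rtrancl[OF sym_vr_edges[OF assms(1)]] unfolding vr_class_def by (auto dest: symD)
  then show "vr_class X d r y = vr_class X d r x"
    unfolding vr_class_def by (auto intro: rtrancl_trans)
qed

lemma ker_plus_iff:
  "v \<in> ker_plus X d r \<longleftrightarrow> v \<in> chains0 X \<and> (\<forall>x\<in>X. (\<Sum>y\<in>vr_class X d r x. v y) = 0)"
  unfolding ker_plus_def rho0_def vr_comps_eq by (auto simp: fun_eq_iff)

lemma ker_plus_mono:
  assumes fm: "finite_metric_space X d" and "r \<le> s"
  shows "ker_plus X d r \<subseteq> ker_plus X d s"
proof
  fix v assume v: "v \<in> ker_plus X d r"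
  have "(\<Sum>y\<in>vr_class X d s x. v y) = 0" if "x \<in> X" for x
  proof -
    let ?C = "vr_class X d s x"
    have fiber: "{y \<in> ?C. vr_class X d r y = vr_class X d r y0} = vr_class X d r y0"
      if "y0 \<in> ?C" for y0
    proof -
      have "y0 \<in> X" using vr_class_subset that by (rule subsetD)
      then have "vr_class X d s y0 = ?C" using that by (rule vr_class_eq_iff[OF fm, THEN iffD2])
      then have "vr_class X d r y0 \<subseteq> ?C" using vr_class_mono[OF \<open>r \<le> s\<close>, of X d y0] by simp
      moreover have "y \<in> vr_class X d r y0 \<longleftrightarrow> vr_class X d r y = vr_class X d r y0" if "y \<in> X" for y
        using vr_class_eq_iff[OF fm that] by simp
      ultimately show ?thesis using vr_class_subset[of X d r y0] vr_class_subset[of X d s x] by auto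
    qed
    have "finite ?C"
      using finite_subset[OF vr_class_subset finite_metric_space_finite[OF fm]] .
    then have "(\<Sum>y\<in>?C. v y) = (\<Sum>D\<in>vr_class X d r ` ?C. \<Sum>y\<in>{y \<in> ?C. vr_class X d r y = D}. v y)"
      by (rule sum.image_gen)
    also have "\<dots> = (\<Sum>D\<in>vr_class X d r ` ?C. \<Sum>y\<in>D. v y)"
      using fiber by (intro sum.cong) auto
    also have "\<dots> = 0"
      using v vr_class_subset[of X d s x] by (intro sum.neutral) (auto simp: ker_plus_iff)
    finally show ?thesis .
  qed
  with v show "v \<in> ker_plus X d s" by (simp add: ker_plus_iff)
qed

lemma finite_UNIV_bit: "finite (UNIV :: bit set)"
proof -
  have "(UNIV :: bit set) = {0, 1}" by (auto intro: bit.exhaust)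
  then show ?thesis by (metis finite.emptyI finite_insert)
qed

lemma finite_chains0: "finite X \<Longrightarrow> finite (chains0 X)"
  using finite_set_of_finite_funs[OF _ finite_UNIV_bit, of X 0] unfolding chains0_def by simp

lemma subspace_ker_plus: "bit_vs.subspace (ker_plus X d r)"
  unfolding subspace_bit_iff
proof (intro conjI ballI)
  show "0 \<in> ker_plus X d r" by (simp add: ker_plus_iff chains0_def)
  fix v w assume "v \<in> ker_plus X d r" "w \<in> ker_plus X d r"
  then show "v + w \<in> ker_plus X d r"
    by (simp add: ker_plus_iff chains0_def sum.distrib del: add_bit_eq_xor)
qed

lemma finite_ker_plus: "finite X \<Longrightarrow> finite (ker_plus X d r)"
  using finite_chains0 by (rule finite_subset[rotated]) (auto simp: ker_plus_def)

lemma ker_minus_subset_ker_plus: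
  assumes "finite_metric_space X d"
  shows "ker_minus X d b \<subseteq> ker_plus X d b"
  unfolding ker_minus_def
proof (rule UN_least)
  show "ker_plus X d r \<subseteq> ker_plus X d b" if "r \<in> {0..<b}" for r
    using assms that by (intro ker_plus_mono) auto
qed

lemma ker_plus_subset_ker_minus: "0 \<le> a \<Longrightarrow> a < b \<Longrightarrow> ker_plus X d a \<subseteq> ker_minus X d b"
  unfolding ker_minus_def by auto

lemma subspace_ker_minus:
  assumes fm: "finite_metric_space X d" and "0 < b"
  shows "bit_vs.subspace (ker_minus X d b)"
  unfolding subspace_bit_iff
proof (intro conjI ballI)
  show "0 \<in> ker_minus X d b"
    using \<open>0 < b\<close> bit_vs.subspace_0[OF subspace_ker_plus, of X d 0] unfolding ker_minus_def by force
next
  fix v w assume "v \<in> ker_minus X d b" "w \<in> ker_minus X d b"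
  then obtain r s where "r \<in> {0..<b}" "s \<in> {0..<b}" "v \<in> ker_plus X d r" "w \<in> ker_plus X d s"
    unfolding ker_minus_def by blast
  then have "v + w \<in> ker_plus X d (max r s)" and "max r s \<in> {0..<b}"
    using ker_plus_mono[OF fm, of r "max r s"] ker_plus_mono[OF fm, of s "max r s"]
    by (auto intro: bit_vs.subspace_add[OF subspace_ker_plus])
  then show "v + w \<in> ker_minus X d b" unfolding ker_minus_def by blast
qed

lemma ker_minus_eq_ker_plus:
  assumes fm: "finite_metric_space X d" and "0 < b" "b \<notin> bar_set X d"
  shows "ker_minus X d b = ker_plus X d b"
proof (rule subspace_eq_if_bdim_eq)
  have "bdim (ker_minus X d b) \<le> bdim (ker_plus X d b)"
    using ker_minus_subset_ker_plus[OF fm] finite_ker_plus[OF finite_metric_space_finite[OF fm]]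
    by (rule bdim_subset)
  moreover have "\<not> bdim (ker_minus X d b) < bdim (ker_plus X d b)"
    using assms(2,3) unfolding bar_set_def bar_mult_def by simp
  ultimately show "bdim (ker_minus X d b) = bdim (ker_plus X d b)" by simp
qed (use assms in \<open>auto simp: ker_minus_subset_ker_plus finite_ker_plus finite_metric_space_finite
      subspace_ker_plus subspace_ker_minus\<close>)

lemma ker_plus_cong: "vr_edges X d r = vr_edges X d s \<Longrightarrow> ker_plus X d r = ker_plus X d s"
  unfolding ker_plus_def rho0_def vr_comps_def by simp

lemma bar_set_subset_distances:
  assumes fm: "finite_metric_space X d"
  shows "bar_set X d \<subseteq> (\<lambda>(x, y). d x y) ` (X \<times> X)"
proof
  fix b assume "b \<in> bar_set X d"
  then have "0 < b" and ne: "ker_minus X d b \<noteq> ker_plus X d b"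
    unfolding bar_set_def bar_mult_def by auto
  show "b \<in> (\<lambda>(x, y). d x y) ` (X \<times> X)"
  proof (rule ccontr)
    assume b: "b \<notin> (\<lambda>(x, y). d x y) ` (X \<times> X)"
    \<comment> \<open>No edge enters the Vietoris-Rips graph at scale b, so VR_b = VR_r
      for the largest distance r < b.\<close>
    define r where "r = Max (insert 0 {t \<in> (\<lambda>(x, y). d x y) ` (X \<times> X). t < b})"
    have fin: "finite (insert 0 {t \<in> (\<lambda>(x, y). d x y) ` (X \<times> X). t < b})"
      using finite_metric_space_finite[OF fm] by simp
    then have "0 \<le> r" "r < b"
      unfolding r_def using \<open>0 < b\<close> by auto
    have "d x y \<le> r" if "x \<in> X" "y \<in> X" "d x y \<le> b" for x y
    proof -
      have "d x y \<noteq> b" using b that(1,2) by force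
      then show ?thesis unfolding r_def using fin that by (intro Max_ge) auto
    qed
    then have "vr_edges X d r = vr_edges X d b"
      using \<open>r < b\<close> unfolding vr_edges_def by auto
    then have "ker_plus X d b \<subseteq> ker_minus X d b"
      using ker_plus_subset_ker_minus[OF \<open>0 \<le> r\<close> \<open>r < b\<close>] ker_plus_cong by metis
    with ne ker_minus_subset_ker_plus[OF fm] show False by blast
  qed
qed

lemma finite_bar_set:
  assumes "finite_metric_space X d"
  shows "finite (bar_set X d)"
  using bar_set_subset_distances[OF assms] by (rule finite_subset)
    (simp add: finite_metric_space_finite[OF assms])

lemma bar_set_pos: "b \<in> bar_set X d \<Longrightarrow> 0 < b"
  unfolding bar_set_def by simp

lemma additive_push0: "additive (push0 X f)"
  by unfold_locales (simp add: push0_def fun_eq_iff sum.distrib del: add_bit_eq_xor)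

lemma block_M0_eq_block_dim:
  "block_M0 X dX Z dZ f a b = block_dim (push0 X f ` ker_plus X dX a) (push0 X f ` ker_minus X dX a)
     (ker_plus Z dZ b) (ker_minus Z dZ b)"
  unfolding block_M0_def block_dim_def ..

lemma sum_block_M0_le_bar_mult_source:
  assumes fmX: "finite_metric_space X dX" and fmZ: "finite_metric_space Z dZ" and "0 < a"
  shows "(\<Sum>b\<in>bar_set Z dZ. block_M0 X dX Z dZ f a b) \<le> bar_mult X dX a"
proof -
  let ?F = "push0 X f"
  have "ker_plus Z dZ s \<subseteq> ker_minus Z dZ t" if "s \<in> bar_set Z dZ" "s < t" for s t
    using bar_set_pos[OF that(1)] that(2) by (intro ker_plus_subset_ker_minus) auto
  then have "(\<Sum>b\<in>bar_set Z dZ. block_M0 X dX Z dZ f a b) + bdim (?F ` ker_minus X dX a)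
      \<le> bdim (?F ` ker_plus X dX a)"
    unfolding block_M0_eq_block_dim
    using fmX fmZ \<open>0 < a\<close>
    by (intro sum_block_dim_le)
      (auto simp: finite_bar_set finite_ker_plus finite_metric_space_finite bar_set_pos
        subspace_ker_plus subspace_ker_minus subspace_image_additive[OF additive_push0]
        ker_plus_subset_ker_minus ker_minus_subset_ker_plus image_mono)
  moreover have "bdim (?F ` ker_plus X dX a) + bdim (ker_minus X dX a)
      \<le> bdim (?F ` ker_minus X dX a) + bdim (ker_plus X dX a)"
    using fmX \<open>0 < a\<close>
    by (intro bdim_image_le additive_push0)
      (auto simp: finite_ker_plus finite_metric_space_finite subspace_ker_plus subspace_ker_minus
        ker_minus_subset_ker_plus)
  ultimately show ?thesis
    using \<open>0 < a\<close> by (simp add: bar_mult_def)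
qed

lemma sum_block_M0_le_bar_mult_target:
  assumes fmX: "finite_metric_space X dX" and fmZ: "finite_metric_space Z dZ" and "0 < b"
  shows "(\<Sum>a\<in>bar_set X dX. block_M0 X dX Z dZ f a b) \<le> bar_mult Z dZ b"
proof -
  have "push0 X f ` ker_plus X dX s \<subseteq> push0 X f ` ker_minus X dX t"
    if "s \<in> bar_set X dX" "s < t" for s t
    using bar_set_pos[OF that(1)] that(2) by (intro image_mono ker_plus_subset_ker_minus) auto
  then have "(\<Sum>a\<in>bar_set X dX. block_M0 X dX Z dZ f a b) + bdim (ker_minus Z dZ b)
      \<le> bdim (ker_plus Z dZ b)"
    unfolding block_M0_eq_block_dim block_dim_commute[of "push0 X f ` ker_plus X dX _"]
    using fmX fmZ \<open>0 < b\<close>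
    by (intro sum_block_dim_le)
      (auto simp: finite_bar_set finite_ker_plus finite_metric_space_finite bar_set_pos
        subspace_ker_plus subspace_ker_minus subspace_image_additive[OF additive_push0]
        ker_plus_subset_ker_minus ker_minus_subset_ker_plus image_mono)
  then show ?thesis
    using \<open>0 < b\<close> by (simp add: bar_mult_def)
qed

lemma block_M0_eq_0:
  assumes fmX: "finite_metric_space X dX" and fmZ: "finite_metric_space Z dZ"
    and "0 < a" "0 < b" and "a \<notin> bar_set X dX \<or> b \<notin> bar_set Z dZ"
  shows "block_M0 X dX Z dZ f a b = 0"
  using assms(5)
proof
  assume "a \<notin> bar_set X dX"
  then have "ker_minus X dX a = ker_plus X dX a"
    using fmX \<open>0 < a\<close> by (rule ker_minus_eq_ker_plus[rotated 2])
  then show ?thesis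
    unfolding block_M0_eq_block_dim using fmX fmZ \<open>0 < b\<close>
    unfolding \<open>ker_minus X dX a = ker_plus X dX a\<close>
    by (intro block_dim_self_eq_0)
      (auto simp: finite_ker_plus finite_metric_space_finite subspace_ker_plus subspace_ker_minus
        subspace_image_additive[OF additive_push0])
next
  assume "b \<notin> bar_set Z dZ"
  then have "ker_minus Z dZ b = ker_plus Z dZ b"
    using fmZ \<open>0 < b\<close> by (rule ker_minus_eq_ker_plus[rotated 2])
  then show ?thesis
    unfolding block_M0_eq_block_dim block_dim_commute[of "push0 X f ` ker_plus X dX a"]
    using fmX fmZ \<open>0 < a\<close>
    unfolding \<open>ker_minus Z dZ b = ker_plus Z dZ b\<close>
    by (intro block_dim_self_eq_0)
      (auto simp: finite_ker_plus finite_metric_space_finite subspace_ker_plus subspace_ker_minus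
        subspace_image_additive[OF additive_push0])
qed

section \<open>Partial matchings with prescribed block counts\<close>

definition offset :: "'a::linorder set \<Rightarrow> ('a \<Rightarrow> nat) \<Rightarrow> 'a \<Rightarrow> nat" where
  "offset T N t = (\<Sum>s\<in>{s \<in> T. s < t}. N s)"

lemma offset_add_le_offset:
  assumes "finite T" "s \<in> T" "s < t"
  shows "offset T N s + N s \<le> offset T N t"
proof -
  have "offset T N s + N s = sum N (insert s {s' \<in> T. s' < s})"
    unfolding offset_def using assms(1) by simp
  also have "\<dots> \<le> offset T N t"
    unfolding offset_def using assms by (intro sum_mono2) auto
  finally show ?thesis .
qed

lemma offset_add_le_sum:
  assumes "finite T" "t \<in> T"
  shows "offset T N t + N t \<le> sum N T"
proof -
  have "offset T N t + N t = sum N (insert t {s \<in> T. s < t})"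
    unfolding offset_def using assms(1) by simp
  also have "\<dots> \<le> sum N T"
    using assms by (intro sum_mono2) auto
  finally show ?thesis .
qed

lemma inj_on_offset:
  assumes "finite T"
  shows "inj_on (\<lambda>(t, k). offset T N t + k) {(t, k). t \<in> T \<and> 1 \<le> k \<and> k \<le> N t}"
proof (rule inj_onI, clarify)
  fix s k t l
  assume s: "s \<in> T" "1 \<le> k" "k \<le> N s" and t: "t \<in> T" "1 \<le> l" "l \<le> N t"
    and eq: "offset T N s + k = offset T N t + l"
  have "\<not> s < t"
  proof
    assume "s < t"
    from offset_add_le_offset[OF assms s(1) this, of N] s(3) t(2) eq show False by linarith
  qed
  moreover have "\<not> t < s"
  proof
    assume "t < s"
    from offset_add_le_offset[OF assms t(1) this, of N] s(2) t(3) eq show False by linarith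
  qed
  ultimately have "s = t" by simp
  with eq show "s = t \<and> k = l" by simp
qed

lemma partial_matching_image:
  assumes "inj_on l I" "inj_on r I" "l ` I \<subseteq> P" "r ` I \<subseteq> Q"
  shows "partial_matching ((\<lambda>i. (l i, r i)) ` I) P Q"
  using assms unfolding partial_matching_def by (auto dest: inj_onD)

lemma partial_matching_with_block_counts:
  fixes S T :: "real set" and m m' :: "real \<Rightarrow> nat" and M :: "real \<Rightarrow> real \<Rightarrow> nat"
  assumes "finite S" "finite T"
    and row: "\<And>a. a \<in> S \<Longrightarrow> (\<Sum>b\<in>T. M a b) \<le> m a"
    and col: "\<And>b. b \<in> T \<Longrightarrow> (\<Sum>a\<in>S. M a b) \<le> m' b"
  shows "\<exists>\<sigma>. partial_matching \<sigma> (Rep S m) (Rep T m')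
    \<and> (\<forall>a b. card {(p, q) \<in> \<sigma>. fst p = a \<and> fst q = b} = (if a \<in> S \<and> b \<in> T then M a b else 0))"
proof -
  define I where "I = {(a, b, k). a \<in> S \<and> b \<in> T \<and> 1 \<le> k \<and> k \<le> M a b}"
  define l where "l = (\<lambda>(a, b, k). (a, offset T (M a) b + k))"
  define r where "r = (\<lambda>(a, b, k). (b, offset S (\<lambda>a. M a b) a + k))"
  have "inj_on l I"
  proof (rule inj_onI)
    fix i j assume "i \<in> I" "j \<in> I" "l i = l j"
    then show "i = j"
      using inj_onD[OF inj_on_offset[OF \<open>finite T\<close>, of "M (fst i)"], of "snd i" "snd j"]
      unfolding I_def l_def by auto
  qed
  moreover have "inj_on r I"
  proof (rule inj_onI)
    fix i j assume "i \<in> I" "j \<in> I" "r i = r j"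
    then show "i = j"
      using inj_onD[OF inj_on_offset[OF \<open>finite S\<close>, of "\<lambda>a. M a (fst (snd i))"],
          of "(fst i, snd (snd i))" "(fst j, snd (snd j))"]
      unfolding I_def r_def by auto
  qed
  moreover have "l ` I \<subseteq> Rep S m"
    using offset_add_le_sum[OF \<open>finite T\<close>] row unfolding l_def I_def Rep_def
    by clarsimp (metis add_le_mono le_trans order_refl)
  moreover have "r ` I \<subseteq> Rep T m'"
    using offset_add_le_sum[OF \<open>finite S\<close>] col unfolding r_def I_def Rep_def
    by clarsimp (metis add_le_mono le_trans order_refl)
  ultimately have "partial_matching ((\<lambda>i. (l i, r i)) ` I) (Rep S m) (Rep T m')"
    by (rule partial_matching_image)
  moreover have "card {(p, q) \<in> (\<lambda>i. (l i, r i)) ` I. fst p = a \<and> fst q = b}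
      = (if a \<in> S \<and> b \<in> T then M a b else 0)" for a b
  proof -
    have "{(p, q) \<in> (\<lambda>i. (l i, r i)) ` I. fst p = a \<and> fst q = b}
        = (\<lambda>k. (l (a, b, k), r (a, b, k))) ` {k. (a, b, k) \<in> I}"
      unfolding l_def r_def by force
    moreover have "inj_on (\<lambda>k. (l (a, b, k), r (a, b, k))) {k. (a, b, k) \<in> I}"
      unfolding l_def by (rule inj_onI) simp
    moreover have "{k. (a, b, k) \<in> I} = (if a \<in> S \<and> b \<in> T then {1..M a b} else {})"
      unfolding I_def by auto
    ultimately show ?thesis by (simp add: card_image)
  qed
  ultimately show ?thesis by blast
qed

theorem lemma4p2:
  fixes X :: "'a set" and dX :: "'a \<Rightarrow> 'a \<Rightarrow> real"
    and Z :: "'b set" and dZ :: "'b \<Rightarrow> 'b \<Rightarrow> real"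
    and f :: "'a \<Rightarrow> 'b"
  assumes "finite_metric_space X dX" and "finite_metric_space Z dZ"
    and "non_expansive X dX Z dZ f"
  shows "(\<forall>a\<in>bar_set X dX. (\<Sum>b\<in>bar_set Z dZ. block_M0 X dX Z dZ f a b) \<le> bar_mult X dX a)
       \<and> (\<forall>b\<in>bar_set Z dZ. (\<Sum>a\<in>bar_set X dX. block_M0 X dX Z dZ f a b) \<le> bar_mult Z dZ b)
       \<and> (\<exists>\<sigma>. partial_matching \<sigma> (Rep (bar_set X dX) (bar_mult X dX)) (Rep (bar_set Z dZ) (bar_mult Z dZ))
              \<and> (\<forall>a>0. \<forall>b>0. card {(p, q) \<in> \<sigma>. fst p = a \<and> fst q = b} = block_M0 X dX Z dZ f a b))"
proof -
  have row: "\<forall>a\<in>bar_set X dX. (\<Sum>b\<in>bar_set Z dZ. block_M0 X dX Z dZ f a b) \<le> bar_mult X dX a"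
    using assms(1,2) bar_set_pos sum_block_M0_le_bar_mult_source by blast
  moreover have col: "\<forall>b\<in>bar_set Z dZ. (\<Sum>a\<in>bar_set X dX. block_M0 X dX Z dZ f a b) \<le> bar_mult Z dZ b"
    using assms(1,2) bar_set_pos sum_block_M0_le_bar_mult_target by blast
  moreover obtain \<sigma> where
    "partial_matching \<sigma> (Rep (bar_set X dX) (bar_mult X dX)) (Rep (bar_set Z dZ) (bar_mult Z dZ))"
    and count: "\<And>a b. card {(p, q) \<in> \<sigma>. fst p = a \<and> fst q = b}
      = (if a \<in> bar_set X dX \<and> b \<in> bar_set Z dZ then block_M0 X dX Z dZ f a b else 0)"
    using partial_matching_with_block_counts[OF finite_bar_set[OF assms(1)] finite_bar_set[OF assms(2)]]
      row col by blast
  moreover have "card {(p, q) \<in> \<sigma>. fst p = a \<and> fst q = b} = block_M0 X dX Z dZ f a b"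
    if "0 < a" "0 < b" for a b
    using count[of a b] block_M0_eq_0[OF assms(1,2) that] by auto
  ultimately show ?thesis by blast
qed

end
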